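(* Let $\Gamma$ be a locally finite weighted graph and let $X$ be a finite subset of its vertex set. Then the following are equivalent: (1) $\Delta(\mathbb{R}^\Gamma_{\Gamma\setminus X})=\Delta(\mathbb{R}^\Gamma)$; (2) every function $f:X\to\mathbb{R}$ extends to a harmonic function on all of $\Gamma$.
   Context: Weighted graph: undirected, no loops or multiple edges, weights $\omega_{xy}=\omega_{yx}>0$, $\deg x=\sum_{y\sim x}\omega_{xy}$. Laplacian: $\Delta f(x)=f(x)-\frac{1}{\deg x}\sum_{y\sim x}\omega_{xy}f(y)$ for $f\in\mathbb{R}^\Gamma$. For a set $Y$ of vertices, $\mathbb{R}^\Gamma_Y$ denotes the space of functions $\Gamma\to\mathbb{R}$ supported on $Y$. A function is harmonic if $\Delta f\equiv 0$. *)

theory Defs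
  imports Complex_Main
begin

definition weighted_graph :: "('v \<Rightarrow> 'v \<Rightarrow> real) \<Rightarrow> bool" where
  "weighted_graph w \<longleftrightarrow> (\<forall>x y. w x y = w y x) \<and> (\<forall>x y. 0 \<le> w x y) \<and> (\<forall>x. w x x = 0)"

definition adj :: "('v \<Rightarrow> 'v \<Rightarrow> real) \<Rightarrow> 'v \<Rightarrow> 'v \<Rightarrow> bool" where
  "adj w x y \<longleftrightarrow> 0 < w x y"

definition nbhd :: "('v \<Rightarrow> 'v \<Rightarrow> real) \<Rightarrow> 'v \<Rightarrow> 'v set" where
  "nbhd w x = {y. adj w x y}"

definition locally_finite :: "('v \<Rightarrow> 'v \<Rightarrow> real) \<Rightarrow> bool" where
  "locally_finite w \<longleftrightarrow> (\<forall>x. finite (nbhd w x))"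

definition deg :: "('v \<Rightarrow> 'v \<Rightarrow> real) \<Rightarrow> 'v \<Rightarrow> real" where
  "deg w x = (\<Sum>y\<in>nbhd w x. w x y)"

definition laplacian :: "('v \<Rightarrow> 'v \<Rightarrow> real) \<Rightarrow> ('v \<Rightarrow> real) \<Rightarrow> 'v \<Rightarrow> real" where
  "laplacian w f x = f x - (1 / deg w x) * (\<Sum>y\<in>nbhd w x. w x y * f y)"

definition supported_on :: "'v set \<Rightarrow> ('v \<Rightarrow> real) set" where
  "supported_on Y = {f. \<forall>x. x \<notin> Y \<longrightarrow> f x = 0}"

definition harmonic :: "('v \<Rightarrow> 'v \<Rightarrow> real) \<Rightarrow> ('v \<Rightarrow> real) \<Rightarrow> bool" where
  "harmonic w f \<longleftrightarrow> (\<forall>x. laplacian w f x = 0)"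

end

theory Submission
  imports Defs
begin

text \<open>The Laplacian is linear and its kernel consists of the harmonic functions, so
  \<open>\<Delta> h = \<Delta> u\<close> with \<open>u\<close> vanishing on \<open>X\<close> says exactly that \<open>h - u\<close> is harmonic and
  agrees with \<open>h\<close> on \<open>X\<close>. Hence both conditions say that every function agrees on \<open>X\<close>
  with a harmonic one; no property of the graph or of \<open>X\<close> is needed.\<close>

lemma laplacian_diff:
  "laplacian w (\<lambda>x. f x - g x) x = laplacian w f x - laplacian w g x"
  unfolding laplacian_def by (simp add: sum_subtractf algebra_simps)

lemma harmonic_diff_iff:
  "harmonic w (\<lambda>x. f x - g x) \<longleftrightarrow> laplacian w f = laplacian w g"
  by (auto simp: harmonic_def laplacian_diff)

lemma diff_supported_on_compl_iff:
  "(\<lambda>x. f x - g x) \<in> supported_on (UNIV - X) \<longleftrightarrow> (\<forall>x\<in>X. f x = g x)"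
  by (auto simp: supported_on_def)

lemma laplacian_in_image_supported_on_compl_iff:
  "laplacian w h \<in> laplacian w ` supported_on (UNIV - X)
     \<longleftrightarrow> (\<exists>f. harmonic w f \<and> (\<forall>x\<in>X. f x = h x))"
proof
  assume "laplacian w h \<in> laplacian w ` supported_on (UNIV - X)"
  then obtain u where u: "u \<in> supported_on (UNIV - X)" "laplacian w h = laplacian w u"
    by auto
  have "harmonic w (\<lambda>x. h x - u x)"
    using u(2) by (simp add: harmonic_diff_iff)
  moreover have "\<forall>x\<in>X. h x - u x = h x"
    using u(1) by (auto simp: supported_on_def)
  ultimately show "\<exists>f. harmonic w f \<and> (\<forall>x\<in>X. f x = h x)"
    by blast
next
  assume "\<exists>f. harmonic w f \<and> (\<forall>x\<in>X. f x = h x)"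
  then obtain f where f: "harmonic w f" "\<forall>x\<in>X. f x = h x"
    by blast
  have "(\<lambda>x. h x - f x) \<in> supported_on (UNIV - X)"
    using f(2) by (simp add: diff_supported_on_compl_iff)
  moreover have "laplacian w h = laplacian w (\<lambda>x. h x - f x)"
    using f(1) by (simp add: laplacian_diff harmonic_def fun_eq_iff)
  ultimately show "laplacian w h \<in> laplacian w ` supported_on (UNIV - X)"
    by (metis image_eqI)
qed

theorem lemma5p3:
  fixes w :: "'v \<Rightarrow> 'v \<Rightarrow> real" and X :: "'v set"
  assumes "weighted_graph w" and "locally_finite w"
    and "\<And>x. nbhd w x \<noteq> {}"
    and "finite X"
  shows "laplacian w ` supported_on (UNIV - X) = laplacian w ` UNIV
     \<longleftrightarrow> (\<forall>g :: 'v \<Rightarrow> real. \<exists>f. harmonic w f \<and> (\<forall>x\<in>X. f x = g x))"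
proof -
  have "laplacian w ` supported_on (UNIV - X) = laplacian w ` UNIV
     \<longleftrightarrow> (\<forall>g. laplacian w g \<in> laplacian w ` supported_on (UNIV - X))"
    by blast
  then show ?thesis
    by (simp add: laplacian_in_image_supported_on_compl_iff)
qed

end
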